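(* Let $0<p\leqslant q:=1-p$ and let $\phi^*$ be as in the context. Then for every $\sigma>-1$ and every $\varepsilon>0$, \[ |\phi^*(\sigma\pm it)| = O\left(e^{-(\pi/2-\varepsilon)|t|}\right),\qquad |t|\to\infty . \]
   Context: The random variables $X_n$ are defined by $X_0=0$ and $X_n \stackrel{d}{=} X_{I_n}+1$ for $n\geqslant 1$, where $(X_n)$ and $(I_n)$ are independent and $\mathbb{P}(I_n=k)=\binom{n}{k}\frac{p^kq^{n-k}-p^k(q-p)^{n-k}}{1-q^n}$ for $k=0,\dots,n-1$. Let $\tilde f_1(z):=e^{-z}\sum_{n\geqslant0}\mathbb{E}(X_n) z^n/n!$ and, for $\Re(s)>-1$, $\phi^*(s):=\int_0^\infty e^{-t}t^{s-1}\left(\tilde f_1\left(p^{-1}qt\right)-\tilde f_1(t)\right)dt$. *)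

theory Defs
  imports "HOL-Probability.Probability" "HOL-Library.Landau_Symbols"
begin

text \<open>Distribution of I_n: P(I_n = k) = C(n,k) (p^k q^(n-k) - p^k (q-p)^(n-k)) / (1 - q^n),
  k = 0..n-1, with q = 1 - p.  For 0 < p <= q these weights are nonnegative and sum to 1,
  so embed_pmf yields exactly this distribution.\<close>
definition I_weight :: "real \<Rightarrow> nat \<Rightarrow> nat \<Rightarrow> real" where
  "I_weight p n k = (if k < n then
     real (n choose k) * (p ^ k * (1 - p) ^ (n - k) - p ^ k * ((1 - p) - p) ^ (n - k))
       / (1 - (1 - p) ^ n) else 0)"

definition I_pmf :: "real \<Rightarrow> nat \<Rightarrow> nat pmf" where
  "I_pmf p n = embed_pmf (I_weight p n)"

text \<open>Law of X_n: X_0 = 0, X_n = X_{I_n} + 1 with X and I_n independent.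
  (On the support of I_n we have k < n, so min k n = k.)\<close>
fun X_pmf :: "real \<Rightarrow> nat \<Rightarrow> nat pmf" where
  "X_pmf p 0 = return_pmf 0"
| "X_pmf p (Suc n) = bind_pmf (I_pmf p (Suc n)) (\<lambda>k. map_pmf Suc (X_pmf p (min k n)))"

definition mean_X :: "real \<Rightarrow> nat \<Rightarrow> real" where
  "mean_X p n = measure_pmf.expectation (X_pmf p n) real"

definition f1 :: "real \<Rightarrow> complex \<Rightarrow> complex" where
  "f1 p z = exp (- z) * (\<Sum>n. complex_of_real (mean_X p n) * z ^ n / of_nat (fact n))"

definition phi_star :: "real \<Rightarrow> complex \<Rightarrow> complex" where
  "phi_star p s = integral {0<..} (\<lambda>t::real.
      complex_of_real (exp (- t)) * (complex_of_real t) powr (s - 1) *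
      (f1 p (complex_of_real ((1 - p) / p * t)) - f1 p (complex_of_real t)))"

end

theory Submission
  imports Defs "HOL-Complex_Analysis.Complex_Analysis" "HOL-Real_Asymp.Real_Asymp"
begin

text \<open>Write q = 1 - p. The recurrence for E(X_n) turns into the functional equation
  f(z) = e^{-pz} f(qz) + (1 - e^{-pz}) (1 + f(pz)) for the Poisson transform f of the means.
  Starting from the crude bound |f(z)| \<le> |z| e^{|z|} and applying the equation on the discs
  |z| \<le> R q^{-n}, one gets |f(z)| = O(|z| e^{\<eta>|z|}) on the closed right half-plane for every \<eta> > 0.
  Hence the kernel e^{-z} (f(qz/p) - f(z)) of \<phi>* decays exponentially in every sector
  |arg z| \<le> \<theta> < \<pi>/2, and by Cauchy's theorem the Mellin integral may be taken along the ray
  arg z = \<theta> sgn t, where |z^{s-1}| contributes the factor e^{-\<theta>|t|}.\<close>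

section \<open>Exponential generating functions\<close>

lemma exp_sums_complex: "(\<lambda>n. z ^ n / fact n) sums exp (z::complex)"
  using exp_converges[of z] by (simp add: scaleR_conv_of_real divide_inverse mult.commute)

definition egf :: "(nat \<Rightarrow> real) \<Rightarrow> complex \<Rightarrow> complex" where
  "egf c z = (\<Sum>n. of_real (c n) * z ^ n / fact n)"

context
  fixes c :: "nat \<Rightarrow> real"
  assumes abs_c_le: "\<And>n. \<bar>c n\<bar> \<le> real n"
begin

lemma summable_norm_egf: "summable (\<lambda>n. norm (of_real (c n) * (z::complex) ^ n / fact n))"
proof (rule summable_comparison_test)
  show "summable (\<lambda>n. inverse (fact n) * (2 * norm z) ^ n)"
    by (rule summable_exp)
  have "\<bar>c n\<bar> \<le> 2 ^ n" for n
    using abs_c_le[of n] less_exp[of n] by (simp add: order.trans[OF _ less_imp_le])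
  then have "\<bar>c n\<bar> * norm z ^ n \<le> 2 ^ n * norm z ^ n" for n
    by (intro mult_right_mono) auto
  then show "\<exists>N. \<forall>n\<ge>N. norm (norm (of_real (c n) * z ^ n / fact n)) \<le> inverse (fact n) * (2 * norm z) ^ n"
    by (auto simp: norm_mult norm_divide norm_power power_mult_distrib divide_simps)
qed

lemma egf_sums: "(\<lambda>n. of_real (c n) * z ^ n / fact n) sums egf c z"
  unfolding egf_def using summable_norm_egf by (simp add: summable_norm_cancel summable_sums)

lemma norm_egf_le: "norm (egf c z) \<le> norm z * exp (norm z)"
proof -
  have "(\<lambda>m. norm z * (norm z ^ m / fact m)) sums (norm z * exp (norm z))"
    using exp_converges[of "norm z"] by (intro sums_mult) (simp add: divide_inverse mult.commute)
  then have "(\<lambda>m. real (Suc m) * norm z ^ Suc m / fact (Suc m)) sums (norm z * exp (norm z))"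
    by (simp add: divide_simps)
  from sums_Suc_iff[THEN iffD1, OF this]
  have bound_sums: "(\<lambda>n. real n * norm z ^ n / fact n) sums (norm z * exp (norm z))"
    by simp
  have "norm (egf c z) \<le> (\<Sum>n. norm (of_real (c n) * z ^ n / fact n))"
    unfolding egf_def by (rule summable_norm[OF summable_norm_egf])
  also have "\<dots> \<le> (\<Sum>n. real n * norm z ^ n / fact n)"
    using abs_c_le bound_sums summable_norm_egf
    by (intro suminf_le)
       (auto simp: norm_mult norm_divide norm_power sums_summable intro!: divide_right_mono mult_right_mono)
  also have "\<dots> = norm z * exp (norm z)"
    using sums_unique[OF bound_sums] by simp
  finally show ?thesis .
qed

lemma egf_times_exp_sums:
  "(\<lambda>n. of_real (\<Sum>k\<le>n. real (n choose k) * v ^ k * u ^ (n - k) * c k) * z ^ n / fact n)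
     sums (egf c (of_real v * z) * exp (of_real u * z))"
proof -
  let ?a = "\<lambda>n. of_real (c n) * (of_real v * z) ^ n / fact n"
  let ?b = "\<lambda>n. (of_real u * z) ^ n / fact n :: complex"
  have "summable (\<lambda>n. norm (?b n))"
    using summable_exp[of "norm (of_real u * z)"]
    by (simp add: norm_mult norm_divide norm_power norm_inverse divide_inverse mult.commute)
  from Cauchy_product_sums[OF summable_norm_egf this]
  have "(\<lambda>n. \<Sum>k\<le>n. ?a k * ?b (n - k)) sums (egf c (of_real v * z) * exp (of_real u * z))"
    unfolding egf_def sums_unique[OF exp_sums_complex] .
  moreover have "?a k * ?b (n - k)
      = of_real (real (n choose k) * v ^ k * u ^ (n - k) * c k) * z ^ n / fact n" if "k \<le> n" for n k
  proof -
    have "z ^ n = z ^ k * z ^ (n - k)"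
      using that by (simp flip: power_add)
    moreover have "(of_nat (n choose k) :: complex) = fact n / (fact k * fact (n - k))"
      using binomial_fact[OF that] by simp
    ultimately show ?thesis
      by (simp add: power_mult_distrib field_simps)
  qed
  ultimately show ?thesis
    by (simp add: sum_divide_distrib sum_distrib_right)
qed

lemma egf_holomorphic: "egf c holomorphic_on S"
proof -
  have egf_eq: "egf c = (\<lambda>z. \<Sum>n. of_real (c n) / fact n * z ^ n)"
    by (intro ext) (simp add: egf_def field_simps)
  have "summable (\<lambda>n. of_real (c n) / fact n * z ^ n)" for z :: complex
    using egf_sums[of z] by (simp add: sums_summable field_simps)
  then have "((\<lambda>z. \<Sum>n. of_real (c n) / fact n * z ^ n) has_field_derivative
      (\<Sum>n. diffs (\<lambda>n. of_real (c n) / fact n) n * z ^ n)) (at z)" for z :: complex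
    by (rule termdiffs_strong_converges_everywhere)
  then show ?thesis
    unfolding egf_eq
    by (auto simp: holomorphic_on_def field_differentiable_def intro: has_field_derivative_at_within)
qed

end

section \<open>Growth from the functional equation\<close>

lemma norm_functional_equation_le:
  fixes f :: "complex \<Rightarrow> complex" and p :: real
  assumes p: "0 \<le> p" and z: "0 \<le> Re z"
    and feq: "f z = exp (- of_real p * z) * f (of_real (1 - p) * z)
                  + (1 - exp (- of_real p * z)) * (1 + f (of_real p * z))"
  shows "norm (f z) \<le> norm (f (of_real (1 - p) * z)) + 2 * (1 + norm (f (of_real p * z)))"
proof -
  have exp_le_1: "norm (exp (- of_real p * z)) \<le> 1"
    using p z by simp
  then have "norm (1 - exp (- of_real p * z)) \<le> 2"
    using norm_triangle_ineq4[of 1 "exp (- of_real p * z)"] by (simp only: norm_one)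
  moreover have "norm (1 + f (of_real p * z)) \<le> 1 + norm (f (of_real p * z))"
    using norm_triangle_ineq[of 1 "f (of_real p * z)"] by (simp only: norm_one)
  ultimately have "norm (1 - exp (- of_real p * z)) * norm (1 + f (of_real p * z))
      \<le> 2 * (1 + norm (f (of_real p * z)))"
    by (intro mult_mono) auto
  moreover have "norm (exp (- of_real p * z)) * norm (f (of_real (1 - p) * z)) \<le> norm (f (of_real (1 - p) * z))"
    using mult_right_mono[OF exp_le_1 norm_ge_zero] by simp
  moreover have "norm (f z) \<le> norm (exp (- of_real p * z) * f (of_real (1 - p) * z))
      + norm ((1 - exp (- of_real p * z)) * (1 + f (of_real p * z)))"
    unfolding feq by (rule norm_triangle_ineq)
  ultimately show ?thesis
    unfolding norm_mult by linarith
qed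

lemma functional_equation_growth_step:
  fixes f :: "complex \<Rightarrow> complex" and p C \<eta> R :: real
  assumes p: "0 < p" "p \<le> 1 - p"
    and feq: "f z = exp (- of_real p * z) * f (of_real (1 - p) * z)
                  + (1 - exp (- of_real p * z)) * (1 + f (of_real p * z))"
    and z: "0 \<le> Re z" "R \<le> norm z"
    and const: "0 < C" "0 < \<eta>" "2 \<le> C * R" "ln 3 \<le> \<eta> * (p * R)"
    and bound_q: "norm (f (of_real (1 - p) * z)) \<le> C * ((1 - p) * norm z) * exp (\<eta> * ((1 - p) * norm z))"
    and bound_p: "norm (f (of_real p * z)) \<le> C * (p * norm z) * exp (\<eta> * (p * norm z))"
  shows "norm (f z) \<le> C * norm z * exp (\<eta> * norm z)"
proof -
  define r E where "r = norm z" and "E = exp (\<eta> * ((1 - p) * r))"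
  have "C * R \<le> C * r"
    using z const by (simp add: r_def)
  then have Cr: "2 \<le> C * r"
    using const by linarith
  have E_ge_1: "1 \<le> E"
    using p const by (simp add: E_def r_def)
  have "exp (\<eta> * (p * r)) \<le> E"
    using p const by (simp add: E_def r_def mult_right_mono)
  then have "C * (p * r) * exp (\<eta> * (p * r)) \<le> C * (p * r) * E"
    using p const by (intro mult_left_mono) (auto simp: r_def)
  then have "norm (f z) \<le> C * ((1 - p) * r) * E + 2 * (1 + C * (p * r) * E)"
    using norm_functional_equation_le[OF _ z(1) feq] bound_q bound_p p
    by (simp add: E_def r_def)
  also have "\<dots> \<le> 3 * (C * r * E)"
  proof -
    have "C * r * E * ((1 - p) + 2 * p) \<le> C * r * E * 2"
      using p Cr E_ge_1 by (intro mult_left_mono) auto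
    moreover have "2 \<le> C * r * E"
      using Cr E_ge_1 mult_left_mono[OF E_ge_1, of "C * r"] by simp
    ultimately show ?thesis
      by (simp add: algebra_simps)
  qed
  also have "\<dots> \<le> exp (\<eta> * (p * r)) * (C * r * E)"
  proof (intro mult_right_mono)
    have "\<eta> * (p * R) \<le> \<eta> * (p * r)"
      using z p const by (intro mult_left_mono) (auto simp: r_def)
    then have "ln 3 \<le> \<eta> * (p * r)"
      using const by linarith
    then show "3 \<le> exp (\<eta> * (p * r))"
      by (metis exp_le_cancel_iff exp_ln_iff zero_less_numeral)
  qed (use Cr E_ge_1 in auto)
  also have "\<dots> = C * r * exp (\<eta> * r)"
    by (simp add: E_def algebra_simps flip: exp_add)
  finally show ?thesis
    by (simp add: r_def)
qed

lemma functional_equation_growth_on_discs: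
  fixes f :: "complex \<Rightarrow> complex" and p C \<eta> R :: real
  assumes p: "0 < p" "p \<le> 1 - p"
    and feq: "\<And>z. 0 \<le> Re z \<Longrightarrow> f z = exp (- of_real p * z) * f (of_real (1 - p) * z)
                  + (1 - exp (- of_real p * z)) * (1 + f (of_real p * z))"
    and const: "0 < C" "0 < \<eta>" "2 \<le> C * R" "ln 3 \<le> \<eta> * (p * R)"
    and small: "\<And>z. 0 \<le> Re z \<Longrightarrow> norm z \<le> R \<Longrightarrow> norm (f z) \<le> C * norm z * exp (\<eta> * norm z)"
  shows "0 \<le> Re z \<Longrightarrow> norm z \<le> R / (1 - p) ^ n \<Longrightarrow> norm (f z) \<le> C * norm z * exp (\<eta> * norm z)"
proof (induction n arbitrary: z)
  case (Suc n)
  show ?case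
  proof (cases "norm z \<le> R")
    case False
    have scaled: "norm (f (of_real q * z)) \<le> C * (q * norm z) * exp (\<eta> * (q * norm z))"
      if "0 \<le> q" "q \<le> 1 - p" for q
    proof -
      have "q * norm z \<le> (1 - p) * norm z"
        using that by (intro mult_right_mono) auto
      also have "\<dots> \<le> R / (1 - p) ^ n"
        using Suc.prems(2) p by (simp add: field_simps)
      finally show ?thesis
        using Suc.IH[of "of_real q * z"] that Suc.prems(1) by (simp add: norm_mult)
    qed
    show ?thesis
      using False scaled[of p] scaled[of "1 - p"] p const
      by (intro functional_equation_growth_step[OF p feq[OF Suc.prems(1)] Suc.prems(1)]) auto
  qed (use small Suc.prems in auto)
qed (use small in auto)

lemma functional_equation_growth:
  fixes f :: "complex \<Rightarrow> complex" and p \<eta> :: real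
  assumes p: "0 < p" "p \<le> 1 - p" and \<eta>: "0 < \<eta>"
    and feq: "\<And>z. 0 \<le> Re z \<Longrightarrow> f z = exp (- of_real p * z) * f (of_real (1 - p) * z)
                  + (1 - exp (- of_real p * z)) * (1 + f (of_real p * z))"
    and base: "\<And>z. 0 \<le> Re z \<Longrightarrow> norm (f z) \<le> norm z * exp (norm z)"
  obtains C where "0 < C" "\<And>z. 0 \<le> Re z \<Longrightarrow> norm (f z) \<le> C * norm z * exp (\<eta> * norm z)"
proof -
  define R where "R = max 1 (ln 3 / (\<eta> * p))"
  define C where "C = max (exp R) 2"
  have R: "1 \<le> R" "ln 3 \<le> \<eta> * (p * R)"
    using \<eta> p by (auto simp: R_def field_simps max_def)
  have C: "0 < C" "exp R \<le> C" "2 \<le> C * R"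
    using R mult_mono[of 2 C 1 R] by (auto simp: C_def)
  have small: "norm (f z) \<le> C * norm z * exp (\<eta> * norm z)" if "0 \<le> Re z" "norm z \<le> R" for z
  proof -
    have "exp (norm z) \<le> C"
      using that(2) C(2) by (meson exp_le_cancel_iff order_trans)
    then have "norm z * exp (norm z) \<le> norm z * C"
      by (intro mult_left_mono) auto
    then have "norm (f z) \<le> C * norm z * 1"
      using base[OF that(1)] by (simp add: mult.commute)
    also have "\<dots> \<le> C * norm z * exp (\<eta> * norm z)"
      using C \<eta> by (intro mult_left_mono) auto
    finally show ?thesis .
  qed
  have q: "0 < 1 - p" "1 < 1 / (1 - p)"
    using p by auto
  show ?thesis
  proof (rule that[OF C(1)])
    fix z :: complex assume z: "0 \<le> Re z"
    obtain n where "norm z / R < (1 / (1 - p)) ^ n"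
      using real_arch_pow[OF q(2)] by blast
    then have "norm z \<le> R / (1 - p) ^ n"
      using R q(1) by (simp add: field_simps power_divide)
    then show "norm (f z) \<le> C * norm z * exp (\<eta> * norm z)"
      using functional_equation_growth_on_discs[OF p feq C(1) \<eta> C(3) R(2) small z] by blast
  qed
qed

section \<open>Rotating the ray of integration\<close>

lemma integrable_powr_exp_Ioi:
  fixes \<alpha> \<beta> :: real
  assumes "-1 < \<alpha>" "0 < \<beta>"
  shows "(\<lambda>x. x powr \<alpha> * exp (- \<beta> * x)) integrable_on {0<..}"
proof -
  have "(\<lambda>t. complex_of_real t powr (of_real (\<alpha> + 1) - 1) / of_real (exp (\<beta> * t)))
      absolutely_integrable_on {0<..}"
    using assms by (intro absolutely_integrable_Gamma_integral) auto
  then have "(\<lambda>t. norm (complex_of_real t powr (of_real (\<alpha> + 1) - 1) / of_real (exp (\<beta> * t))))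
      integrable_on {0<..}"
    unfolding absolutely_integrable_on_def by blast
  then show ?thesis
  proof (rule integrable_eq)
    fix x :: real assume "x \<in> {0<..}"
    then have "norm (complex_of_real x powr (of_real (\<alpha> + 1) - 1)) = x powr \<alpha>"
      by (subst norm_powr_real_powr) auto
    then show "norm (complex_of_real x powr (of_real (\<alpha> + 1) - 1) / of_real (exp (\<beta> * x)))
        = x powr \<alpha> * exp (- \<beta> * x)"
      by (simp add: norm_divide norm_mult norm_inverse exp_minus divide_inverse)
  qed
qed

lemma integral_Icc_tendsto_Ioi:
  fixes f :: "real \<Rightarrow> 'a::euclidean_space"
  assumes f: "f absolutely_integrable_on {0<..}"
  shows "(\<lambda>n. integral {1 / real (Suc n)..real (Suc n)} f) \<longlonglongrightarrow> integral {0<..} f"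
proof -
  define I where "I n = {1 / real (Suc n)..real (Suc n)}" for n
  have I_sub: "I n \<subseteq> {0<..}" for n
    by (auto simp: I_def intro: less_le_trans[of 0 "1 / real (Suc n)"])
  have "f absolutely_integrable_on I n" for n
    by (rule set_integrable_subset[OF f _ I_sub]) (simp add: I_def)
  then have "(\<lambda>x. if x \<in> I n then f x else 0) integrable_on {0<..}" for n
    unfolding integrable_restrict_Int Int_absorb2[OF I_sub]
    using absolutely_integrable_on_def by blast
  moreover have "(\<lambda>x. norm (f x)) integrable_on {0<..}"
    using f absolutely_integrable_on_def by blast
  moreover have "(\<lambda>n. if x \<in> I n then f x else 0) \<longlonglongrightarrow> f x" if x: "x \<in> {0<..}" for x
  proof (rule tendsto_eventually)
    obtain N1 where N1: "x < real N1"
      using reals_Archimedean2 by blast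
    obtain N2 where N2: "1 / real (Suc N2) < x"
      using nat_approx_posE[of x] x by auto
    have "x \<in> I n" if "N1 + N2 \<le> n" for n
    proof -
      have "1 / real (Suc n) \<le> 1 / real (Suc N2)"
        using that by (intro divide_left_mono) auto
      then show ?thesis
        using N1 N2 that by (auto simp: I_def)
    qed
    then show "\<forall>\<^sub>F n in sequentially. (if x \<in> I n then f x else 0) = f x"
      by (intro eventually_sequentiallyI[of "N1 + N2"]) simp
  qed
  ultimately have "(\<lambda>n. integral {0<..} (\<lambda>x. if x \<in> I n then f x else 0)) \<longlonglongrightarrow> integral {0<..} f"
    by (intro dominated_convergence(2)) auto
  then show ?thesis
    unfolding integral_restrict_Int Int_absorb2[OF I_sub] by (simp add: I_def)
qed

locale sector_decay =
  fixes h :: "complex \<Rightarrow> complex" and \<kappa> M \<alpha> \<beta> :: real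
  assumes holomorphic: "h holomorphic_on {z. 0 < Re z}"
    and decay: "\<And>z. z \<noteq> 0 \<Longrightarrow> \<kappa> * norm z \<le> Re z \<Longrightarrow> norm (h z) \<le> M * norm z powr \<alpha> * exp (- \<beta> * norm z)"
    and \<kappa>_pos: "0 < \<kappa>" and \<alpha>_gt: "-1 < \<alpha>" and \<beta>_pos: "0 < \<beta>"
begin

lemma continuous_on_half_plane: "continuous_on {z. 0 < Re z} h"
  using holomorphic by (rule holomorphic_on_imp_continuous_on)

lemma has_contour_integral_linepath_half_plane:
  assumes "0 < Re a" "0 < Re b"
  shows "(h has_contour_integral contour_integral (linepath a b) h) (linepath a b)"
  using assms
  by (intro has_contour_integral_integral contour_integrable_continuous_linepath
        continuous_on_subset[OF continuous_on_half_plane] closed_segment_subset convex_halfspace_Re_gt)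
     auto

context
  fixes w :: complex
  assumes w: "norm w = 1" "\<kappa> \<le> Re w"
begin

lemma norm_ray_le:
  assumes "0 < x"
  shows "norm (h (of_real x * w) * w) \<le> M * x powr \<alpha> * exp (- \<beta> * x)"
proof -
  have "norm (of_real x * w) = x" "of_real x * w \<noteq> 0"
    using w assms by (auto simp: norm_mult)
  moreover have "\<kappa> * x \<le> Re (of_real x * w)"
    using w assms by simp
  ultimately show ?thesis
    using decay[of "of_real x * w"] w by (simp add: norm_mult)
qed

lemma ray_absolutely_integrable: "(\<lambda>x. h (of_real x * w) * w) absolutely_integrable_on {0<..}"
proof (rule measurable_bounded_by_integrable_imp_absolutely_integrable)
  have "continuous_on {0<..} (\<lambda>x::real. h (of_real x * w))"
    using w \<kappa>_pos
    by (intro continuous_on_compose2[OF continuous_on_half_plane] continuous_intros)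
       (auto intro: less_le_trans)
  then show "(\<lambda>x. h (of_real x * w) * w) \<in> borel_measurable (lebesgue_on {0<..})"
    by (intro continuous_imp_measurable_on_sets_lebesgue continuous_intros) auto
  show "(\<lambda>x. M * x powr \<alpha> * exp (- \<beta> * x)) integrable_on {0<..}"
    using integrable_cmul[OF integrable_powr_exp_Ioi[OF \<alpha>_gt \<beta>_pos], of M]
    by (simp add: mult.assoc)
qed (use norm_ray_le in auto)

lemma has_integral_ray:
  assumes "0 < a" "a < b"
  shows "((\<lambda>x. h (of_real x * w) * w)
      has_integral contour_integral (linepath (of_real a * w) (of_real b * w)) h) {a..b}"
proof -
  define I where "I = contour_integral (linepath (of_real a * w) (of_real b * w)) h"
  have "(h has_contour_integral I) (linepath (of_real a * w) (of_real b * w))"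
    unfolding I_def using assms w \<kappa>_pos
    by (intro has_contour_integral_linepath_half_plane) (auto intro: mult_pos_pos less_le_trans)
  then have "((\<lambda>x. h (linepath (of_real a * w) (of_real b * w) x) * (of_real b * w - of_real a * w))
      has_integral I) {0..1}"
    by (simp add: has_contour_integral_linepath)
  also have "(\<lambda>x. h (linepath (of_real a * w) (of_real b * w) x) * (of_real b * w - of_real a * w)) =
      (\<lambda>x. (\<lambda>z. h (z * w) * w) (linepath (of_real a) (of_real b) x) * (of_real b - of_real a))"
    by (simp add: linepath_def scaleR_conv_of_real algebra_simps)
  finally have "((\<lambda>z. h (z * w) * w) has_contour_integral I) (linepath (of_real a) (of_real b))"
    by (simp add: has_contour_integral_linepath)
  then show ?thesis
    using assms by (subst (asm) has_contour_integral_linepath_Reals_iff) (auto simp: I_def)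
qed

lemma decay_constant_nonneg: "0 \<le> M"
proof -
  have "0 \<le> M * exp (- \<beta>)"
    using order_trans[OF norm_ge_zero norm_ray_le[of 1]] by simp
  then show ?thesis
    by (simp add: zero_le_mult_iff)
qed

lemma chord_bounds:
  assumes r: "0 < r" and z: "z \<in> closed_segment (of_real r) (of_real r * w)"
  shows "\<kappa> * r \<le> Re z" "\<kappa> * r \<le> norm z" "norm z \<le> r"
proof -
  obtain u where u: "0 \<le> u" "u \<le> 1" "z = (1 - u) *\<^sub>R of_real r + u *\<^sub>R (of_real r * w)"
    using z in_segment(1) by blast
  have "(1 - u) * (r * \<kappa>) + u * (r * \<kappa>) \<le> (1 - u) * r + u * (r * Re w)"
    using u r w \<kappa>_pos complex_Re_le_cmod[of w]
    by (intro add_mono mult_left_mono mult_right_mono) auto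
  moreover have "Re z = (1 - u) * r + u * (r * Re w)"
    using u(3) by simp
  ultimately show Re_z: "\<kappa> * r \<le> Re z"
    by (simp add: algebra_simps)
  then show "\<kappa> * r \<le> norm z"
    using complex_Re_le_cmod[of z] by linarith
  have "norm z \<le> (1 - u) * r + u * r"
    using norm_triangle_ineq[of "(1 - u) *\<^sub>R complex_of_real r" "u *\<^sub>R (of_real r * w)"] u r w
    by (simp add: norm_mult)
  then show "norm z \<le> r"
    by (simp add: algebra_simps)
qed

lemma norm_on_chord_le:
  assumes r: "0 < r" and z: "z \<in> closed_segment (of_real r) (of_real r * w)"
  shows "norm (h z) \<le> M * ((\<kappa> * r) powr \<alpha> + r powr \<alpha>) * exp (- \<beta> * (\<kappa> * r))"
proof -
  note bounds = chord_bounds[OF r z]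
  have "0 < \<kappa> * r"
    using \<kappa>_pos r by simp
  moreover have "\<kappa> * norm z \<le> \<kappa> * r"
    using bounds(3) \<kappa>_pos by (intro mult_left_mono) auto
  ultimately have "z \<noteq> 0" "\<kappa> * norm z \<le> Re z"
    using bounds(1) by auto
  then have "norm (h z) \<le> M * norm z powr \<alpha> * exp (- \<beta> * norm z)"
    by (rule decay)
  also have "\<dots> \<le> M * ((\<kappa> * r) powr \<alpha> + r powr \<alpha>) * exp (- \<beta> * (\<kappa> * r))"
  proof (intro mult_mono mult_left_mono)
    show "norm z powr \<alpha> \<le> (\<kappa> * r) powr \<alpha> + r powr \<alpha>"
    proof (cases "0 \<le> \<alpha>")
      case True
      then have "norm z powr \<alpha> \<le> r powr \<alpha>"
        using bounds(3) by (intro powr_mono2) auto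
      then show ?thesis by (smt (verit) powr_ge_zero)
    next
      case False
      then have "norm z powr \<alpha> \<le> (\<kappa> * r) powr \<alpha>"
        using bounds(2) \<open>0 < \<kappa> * r\<close> by (intro powr_mono2') auto
      then show ?thesis by (smt (verit) powr_ge_zero)
    qed
    show "exp (- \<beta> * norm z) \<le> exp (- \<beta> * (\<kappa> * r))"
      using bounds(2) \<beta>_pos by simp
  qed (use decay_constant_nonneg in auto)
  finally show ?thesis .
qed

lemma norm_contour_integral_chord_le:
  assumes r: "0 < r"
  shows "norm (contour_integral (linepath (of_real r) (of_real r * w)) h)
    \<le> 2 * r * (M * ((\<kappa> * r) powr \<alpha> + r powr \<alpha>) * exp (- \<beta> * (\<kappa> * r)))"
proof -
  have "(h has_contour_integral contour_integral (linepath (of_real r) (of_real r * w)) h)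
      (linepath (of_real r) (of_real r * w))"
    using r w \<kappa>_pos by (intro has_contour_integral_linepath_half_plane) (auto intro: less_le_trans)
  then have "norm (contour_integral (linepath (of_real r) (of_real r * w)) h)
      \<le> M * ((\<kappa> * r) powr \<alpha> + r powr \<alpha>) * exp (- \<beta> * (\<kappa> * r)) * norm (of_real r * w - of_real r)"
    using decay_constant_nonneg
    by (intro has_contour_integral_bound_linepath[OF _ _ norm_on_chord_le[OF r]]) auto
  also have "\<dots> \<le> M * ((\<kappa> * r) powr \<alpha> + r powr \<alpha>) * exp (- \<beta> * (\<kappa> * r)) * (2 * r)"
    using decay_constant_nonneg r w norm_triangle_ineq4[of "of_real r * w" "of_real r"]
    by (intro mult_left_mono) (auto simp: norm_mult)
  finally show ?thesis
    by (simp add: mult_ac)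
qed

lemma chord_integral_tendsto_0:
  shows "((\<lambda>r. contour_integral (linepath (of_real r) (of_real r * w)) h) \<longlongrightarrow> 0) (at_right 0)"
    and "((\<lambda>r. contour_integral (linepath (of_real r) (of_real r * w)) h) \<longlongrightarrow> 0) at_top"
proof -
  define B where "B r = M * (2 * r * ((\<kappa> * r) powr \<alpha> + r powr \<alpha>) * exp (- \<beta> * (\<kappa> * r)))" for r
  have bound: "norm (contour_integral (linepath (of_real r) (of_real r * w)) h) \<le> B r" if "0 < r" for r
    using norm_contour_integral_chord_le[OF that] by (simp add: B_def algebra_simps)
  have "((\<lambda>r. 2 * r * ((\<kappa> * r) powr \<alpha> + r powr \<alpha>) * exp (- \<beta> * (\<kappa> * r))) \<longlongrightarrow> 0) (at_right 0)"
    using \<kappa>_pos \<alpha>_gt \<beta>_pos by real_asymp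
  then have "(B \<longlongrightarrow> 0) (at_right 0)"
    unfolding B_def by (rule tendsto_mult_right_zero)
  then show "((\<lambda>r. contour_integral (linepath (of_real r) (of_real r * w)) h) \<longlongrightarrow> 0) (at_right 0)"
    by (rule Lim_null_comparison[rotated]) (rule eventually_mono[OF eventually_at_right_less bound])
  have "((\<lambda>r. 2 * r * ((\<kappa> * r) powr \<alpha> + r powr \<alpha>) * exp (- \<beta> * (\<kappa> * r))) \<longlongrightarrow> 0) at_top"
    using \<kappa>_pos \<alpha>_gt \<beta>_pos by real_asymp
  then have "(B \<longlongrightarrow> 0) at_top"
    unfolding B_def by (rule tendsto_mult_right_zero)
  then show "((\<lambda>r. contour_integral (linepath (of_real r) (of_real r * w)) h) \<longlongrightarrow> 0) at_top"
    by (rule Lim_null_comparison[rotated]) (rule eventually_mono[OF eventually_gt_at_top bound])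
qed

lemma integral_ray_difference:
  assumes ab: "0 < a" "a < b"
  shows "integral {a..b} (\<lambda>x. h (of_real x)) - integral {a..b} (\<lambda>x. h (of_real x * w) * w)
    = contour_integral (linepath (of_real a) (of_real a * w)) h
      - contour_integral (linepath (of_real b) (of_real b * w)) h"
proof -
  define A B C D where "A = complex_of_real a" "B = complex_of_real b" "C = B * w" "D = A * w"
  define S where "S = {z::complex. 0 < Re z}"
  have convex: "convex S"
    unfolding S_def by (rule convex_halfspace_Re_gt)
  have in_S: "A \<in> S" "B \<in> S" "C \<in> S" "D \<in> S"
    using ab w \<kappa>_pos by (auto simp: A_B_C_D_def S_def intro: mult_pos_pos less_le_trans)
  have has_ci: "(h has_contour_integral contour_integral (linepath X Y) h) (linepath X Y)"
    if "X \<in> S" "Y \<in> S" for X Y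
    using that by (intro has_contour_integral_linepath_half_plane) (auto simp: S_def)
  have reverse: "contour_integral (linepath Y X) h = - contour_integral (linepath X Y) h"
    if "X \<in> S" "Y \<in> S" for X Y
    using has_contour_integral_unique[OF has_ci[OF that(2,1)]
        has_contour_integral_reverse_linepath[OF has_ci[OF that]]] .
  define P where "P = linepath A B +++ (linepath B C +++ (linepath C D +++ linepath D A))"
  have "(h has_contour_integral (contour_integral (linepath A B) h + (contour_integral (linepath B C) h +
      (contour_integral (linepath C D) h + contour_integral (linepath D A) h)))) P"
    unfolding P_def by (intro has_contour_integral_join has_ci in_S valid_path_join valid_path_linepath) auto
  moreover have "(h has_contour_integral 0) P"
  proof (rule Cauchy_theorem_convex_simple[OF _ convex])
    show "h holomorphic_on S"
      unfolding S_def by (rule holomorphic)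
    show "path_image P \<subseteq> S"
      unfolding P_def using closed_segment_subset[OF _ _ convex] in_S by (auto simp: path_image_join)
  qed (auto simp: P_def)
  ultimately have sum_0: "contour_integral (linepath A B) h + (contour_integral (linepath B C) h +
      (contour_integral (linepath C D) h + contour_integral (linepath D A) h)) = 0"
    using has_contour_integral_unique by blast
  have "contour_integral (linepath A B) h = integral {a..b} (\<lambda>x. h (of_real x))"
    unfolding A_B_C_D_def using ab by (subst contour_integral_linepath_Reals_eq) auto
  moreover have "contour_integral (linepath D C) h = integral {a..b} (\<lambda>x. h (of_real x * w) * w)"
    unfolding A_B_C_D_def by (rule integral_unique[OF has_integral_ray[OF ab], symmetric])
  ultimately show ?thesis
    using sum_0 reverse[of D C] reverse[of A D] in_S by (simp add: A_B_C_D_def algebra_simps)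
qed

end

theorem integral_rotate_ray:
  assumes w: "norm w = 1" "\<kappa> \<le> Re w"
  shows "integral {0<..} (\<lambda>x. h (of_real x)) = integral {0<..} (\<lambda>x. h (of_real x * w) * w)"
proof -
  define a b :: "nat \<Rightarrow> real" where "a n = 1 / real (Suc n)" and "b n = real (Suc n)" for n
  have "\<kappa> \<le> 1"
    using w complex_Re_le_cmod[of w] by linarith
  then have "(\<lambda>x. h (of_real x)) absolutely_integrable_on {0<..}"
    using ray_absolutely_integrable[of 1] by simp
  then have lim_rays: "(\<lambda>n. integral {a n..b n} (\<lambda>x. h (of_real x)) - integral {a n..b n} (\<lambda>x. h (of_real x * w) * w))
      \<longlonglongrightarrow> integral {0<..} (\<lambda>x. h (of_real x)) - integral {0<..} (\<lambda>x. h (of_real x * w) * w)"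
    unfolding a_def b_def
    by (intro tendsto_diff integral_Icc_tendsto_Ioi ray_absolutely_integrable[OF w])
  have "filterlim a (at_right 0) sequentially" "filterlim b at_top sequentially"
    unfolding a_def b_def by real_asymp+
  then have "(\<lambda>n. contour_integral (linepath (of_real (a n)) (of_real (a n) * w)) h
      - contour_integral (linepath (of_real (b n)) (of_real (b n) * w)) h) \<longlonglongrightarrow> 0 - 0"
    by (intro tendsto_diff filterlim_compose[OF chord_integral_tendsto_0(1)[OF w]]
        filterlim_compose[OF chord_integral_tendsto_0(2)[OF w]])
  moreover have "\<forall>\<^sub>F n in sequentially.
      contour_integral (linepath (of_real (a n)) (of_real (a n) * w)) h
      - contour_integral (linepath (of_real (b n)) (of_real (b n) * w)) h
    = integral {a n..b n} (\<lambda>x. h (of_real x)) - integral {a n..b n} (\<lambda>x. h (of_real x * w) * w)"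
  proof (rule eventually_sequentiallyI[of 1])
    fix n :: nat assume "1 \<le> n"
    then have "0 < a n" "a n \<le> 1" "1 < b n"
      by (auto simp: a_def b_def)
    then show "contour_integral (linepath (of_real (a n)) (of_real (a n) * w)) h
        - contour_integral (linepath (of_real (b n)) (of_real (b n) * w)) h
      = integral {a n..b n} (\<lambda>x. h (of_real x)) - integral {a n..b n} (\<lambda>x. h (of_real x * w) * w)"
      using integral_ray_difference[OF w] by simp
  qed
  ultimately have "(\<lambda>n. integral {a n..b n} (\<lambda>x. h (of_real x)) - integral {a n..b n} (\<lambda>x. h (of_real x * w) * w))
      \<longlonglongrightarrow> 0 - 0"
    by (rule Lim_transform_eventually)
  from LIMSEQ_unique[OF lim_rays this] show ?thesis
    by simp
qed

end

section \<open>The Poisson transform of the means\<close>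

lemma set_pmf_X_pmf_subset: "set_pmf (X_pmf p n) \<subseteq> {..n}"
proof (induction n rule: less_induct)
  case (less n)
  show ?case
  proof (cases n)
    case (Suc m)
    have "set_pmf (X_pmf p (min k m)) \<subseteq> {..m}" for k
      using less[of "min k m"] Suc by force
    then show ?thesis using Suc by auto
  qed simp
qed

lemma finite_set_pmf_X_pmf: "finite (set_pmf (X_pmf p n))"
  using set_pmf_X_pmf_subset finite_subset by blast

lemma mean_X_nonneg: "0 \<le> mean_X p n"
  unfolding mean_X_def by (rule Bochner_Integration.integral_nonneg) simp

lemma mean_X_le: "mean_X p n \<le> real n"
proof -
  have "mean_X p n \<le> measure_pmf.expectation (X_pmf p n) (\<lambda>_. real n)"
    unfolding mean_X_def using set_pmf_X_pmf_subset[of p n]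
    by (intro integral_mono_AE)
       (auto simp: integrable_measure_pmf_finite finite_set_pmf_X_pmf AE_measure_pmf_iff)
  then show ?thesis by simp
qed

lemma abs_mean_X_le: "\<bar>mean_X p n\<bar> \<le> real n"
  using mean_X_nonneg[of p n] mean_X_le[of p n] by simp

lemma sum_binomial_lessThan:
  fixes a b :: "'a::comm_ring_1"
  shows "(\<Sum>k<n. of_nat (n choose k) * a ^ k * b ^ (n - k)) = (a + b) ^ n - a ^ n"
  by (simp add: binomial_ring lessThan_Suc_atMost[symmetric])

lemma f1_eq_egf: "f1 p z = exp (- z) * egf (mean_X p) z"
  by (simp add: f1_def egf_def)

definition phi_kernel :: "real \<Rightarrow> complex \<Rightarrow> complex" where
  "phi_kernel p z = exp (- z) * (f1 p (of_real ((1 - p) / p) * z) - f1 p z)"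

lemma phi_star_eq_integral:
  "phi_star p s = integral {0<..} (\<lambda>x. of_real x powr (s - 1) * phi_kernel p (of_real x))"
  unfolding phi_star_def phi_kernel_def
  by (intro integral_cong) (simp add: exp_of_real exp_minus mult_ac)

lemma f1_holomorphic: "f1 p holomorphic_on S"
  unfolding f1_eq_egf[abs_def] by (intro holomorphic_intros egf_holomorphic abs_mean_X_le)

lemma phi_kernel_holomorphic: "phi_kernel p holomorphic_on S"
proof -
  have "f1 p \<circ> (\<lambda>z. of_real ((1 - p) / p) * z) holomorphic_on S"
    by (intro holomorphic_on_compose holomorphic_intros f1_holomorphic)
  then show ?thesis
    unfolding phi_kernel_def o_def by (intro holomorphic_intros f1_holomorphic)
qed

lemma norm_powr_phi_kernel_le:
  assumes K: "\<And>z. \<kappa> * norm z \<le> Re z \<Longrightarrow> norm (phi_kernel p z) \<le> K * norm z * exp (- (\<kappa> / 2) * norm z)"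
    and z: "\<kappa> * norm z \<le> Re z" "z \<noteq> 0"
  shows "norm (z powr (s - 1) * phi_kernel p z)
    \<le> K * norm z powr Re s * exp (- Im s * Arg z) * exp (- (\<kappa> / 2) * norm z)"
proof -
  have "norm (z powr (s - 1) * phi_kernel p z)
      = norm z powr (Re s - 1) * exp (- Im s * Arg z) * norm (phi_kernel p z)"
    by (simp add: norm_mult norm_powr_complex)
  also have "\<dots> \<le> norm z powr (Re s - 1) * exp (- Im s * Arg z) * (K * norm z * exp (- (\<kappa> / 2) * norm z))"
    using K[OF z(1)] by (intro mult_left_mono) auto
  also have "\<dots> = K * (norm z * norm z powr (Re s - 1)) * exp (- Im s * Arg z) * exp (- (\<kappa> / 2) * norm z)"
    by (simp add: mult_ac)
  also have "norm z * norm z powr (Re s - 1) = norm z powr Re s"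
    using z(2) by (simp add: powr_mult_base)
  finally show ?thesis .
qed

lemma sector_decay_phi_integrand:
  assumes s: "-1 < Re s" and \<kappa>: "0 < \<kappa>" and K_nonneg: "0 \<le> K"
    and K: "\<And>z. \<kappa> * norm z \<le> Re z \<Longrightarrow> norm (phi_kernel p z) \<le> K * norm z * exp (- (\<kappa> / 2) * norm z)"
  shows "sector_decay (\<lambda>z. z powr (s - 1) * phi_kernel p z) \<kappa> (K * exp (\<bar>Im s\<bar> * pi)) (Re s) (\<kappa> / 2)"
proof
  show "(\<lambda>z. z powr (s - 1) * phi_kernel p z) holomorphic_on {z. 0 < Re z}"
    by (intro holomorphic_intros phi_kernel_holomorphic) (auto simp: complex_nonpos_Reals_iff)
  fix z assume z: "z \<noteq> 0" "\<kappa> * norm z \<le> Re z"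
  have "- Im s * Arg z \<le> \<bar>Im s\<bar> * \<bar>Arg z\<bar>"
    by (metis abs_ge_minus_self abs_mult mult_minus_left)
  also have "\<dots> \<le> \<bar>Im s\<bar> * pi"
    using Arg_bounded[of z] by (intro mult_left_mono) auto
  finally have "exp (- Im s * Arg z) \<le> exp (\<bar>Im s\<bar> * pi)"
    by simp
  then show "norm (z powr (s - 1) * phi_kernel p z)
      \<le> K * exp (\<bar>Im s\<bar> * pi) * norm z powr Re s * exp (- (\<kappa> / 2) * norm z)"
    using norm_powr_phi_kernel_le[OF K z(2,1)] K_nonneg
    by (smt (verit) mult_left_mono mult_right_mono exp_ge_zero powr_ge_zero mult.commute mult.assoc)
qed (use \<kappa> s in auto)

context
  fixes p :: real
  assumes p_pos: "0 < p" and p_le_q: "p \<le> 1 - p"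
begin

lemma power_q_less_1: "n \<ge> 1 \<Longrightarrow> (1 - p) ^ n < 1"
  using p_pos p_le_q by (subst power_less_one_iff) auto

lemma I_weight_nonneg: "0 \<le> I_weight p n k"
proof (cases "k < n")
  case True
  have "((1 - p) - p) ^ (n - k) \<le> (1 - p) ^ (n - k)"
    using p_pos p_le_q by (intro power_mono) auto
  with True power_q_less_1[of n] p_pos show ?thesis
    by (auto simp: I_weight_def intro!: divide_nonneg_pos mult_nonneg_nonneg)
qed (simp add: I_weight_def)

lemma sum_I_weight:
  assumes "n \<ge> 1"
  shows "(\<Sum>k<n. I_weight p n k) = 1"
proof -
  have binom: "(\<Sum>k<n. real (n choose k) * (p ^ k * b ^ (n - k))) = (p + b) ^ n - p ^ n" for b
    using sum_binomial_lessThan[of n p b] by (simp add: mult.assoc)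
  have "(\<Sum>k<n. I_weight p n k)
      = ((\<Sum>k<n. real (n choose k) * (p ^ k * (1 - p) ^ (n - k)))
        - (\<Sum>k<n. real (n choose k) * (p ^ k * ((1 - p) - p) ^ (n - k)))) / (1 - (1 - p) ^ n)"
    by (simp add: I_weight_def right_diff_distrib sum_subtractf flip: sum_divide_distrib)
  also have "\<dots> = (1 - (1 - p) ^ n) / (1 - (1 - p) ^ n)"
    unfolding binom by simp
  finally show ?thesis
    using power_q_less_1[OF assms] by simp
qed

lemma pmf_I_pmf:
  assumes "n \<ge> 1"
  shows "pmf (I_pmf p n) k = I_weight p n k"
proof -
  have "(\<integral>\<^sup>+x. ennreal (I_weight p n x) \<partial>count_space UNIV) = (\<Sum>x<n. ennreal (I_weight p n x))"
    by (rule nn_integral_count_space') (auto simp: I_weight_def)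
  also have "\<dots> = 1"
    using I_weight_nonneg sum_I_weight[OF assms] by (simp add: sum_ennreal)
  finally show ?thesis
    unfolding I_pmf_def by (intro pmf_embed_pmf) (auto simp: I_weight_nonneg)
qed

lemma mean_X_Suc: "mean_X p (Suc n) = (\<Sum>k<Suc n. I_weight p (Suc n) k * (1 + mean_X p k))"
proof -
  have supp: "set_pmf (I_pmf p (Suc n)) \<subseteq> {..<Suc n}"
    using pmf_I_pmf[of "Suc n"] by (auto simp: set_pmf_iff I_weight_def split: if_splits)
  have "mean_X p (Suc n) = (\<Sum>k<Suc n. pmf (I_pmf p (Suc n)) k *\<^sub>R
           measure_pmf.expectation (map_pmf Suc (X_pmf p (min k n))) real)"
    unfolding mean_X_def X_pmf.simps
    by (rule pmf_expectation_bind) (use supp finite_set_pmf_X_pmf in auto)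
  also have "\<dots> = (\<Sum>k<Suc n. I_weight p (Suc n) k * (1 + mean_X p k))"
  proof (intro sum.cong refl)
    fix k assume "k \<in> {..<Suc n}"
    then have "min k n = k" by simp
    moreover have "measure_pmf.expectation (X_pmf p k) (\<lambda>x. 1 + real x) = 1 + mean_X p k"
      unfolding mean_X_def
      by (subst Bochner_Integration.integral_add)
         (auto simp: integrable_measure_pmf_finite finite_set_pmf_X_pmf)
    ultimately show "pmf (I_pmf p (Suc n)) k *\<^sub>R
        measure_pmf.expectation (map_pmf Suc (X_pmf p (min k n))) real
        = I_weight p (Suc n) k * (1 + mean_X p k)"
      using pmf_I_pmf[of "Suc n" k] by simp
  qed
  finally show ?thesis .
qed

lemma mean_X_recurrence:
  "(1 - (1 - p) ^ n) * mean_X p n = (1 - (1 - p) ^ n) +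
     (\<Sum>k\<le>n. real (n choose k) * p ^ k * ((1 - p) ^ (n - k) - ((1 - p) - p) ^ (n - k)) * mean_X p k)"
proof (cases n)
  case (Suc m)
  have weight: "(1 - (1 - p) ^ n) * I_weight p n k
      = real (n choose k) * p ^ k * ((1 - p) ^ (n - k) - ((1 - p) - p) ^ (n - k))" if "k < n" for k
  proof -
    have "1 - (1 - p) ^ n \<noteq> 0"
      using power_q_less_1[of n] Suc by simp
    then show ?thesis
      using that by (simp add: I_weight_def) (simp add: algebra_simps)
  qed
  have "(1 - (1 - p) ^ n) * mean_X p n = (1 - (1 - p) ^ n) * (\<Sum>k<n. I_weight p n k)
      + (\<Sum>k<n. (1 - (1 - p) ^ n) * I_weight p n k * mean_X p k)"
    using mean_X_Suc[of m] Suc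
    by (simp add: distrib_left sum.distrib sum_distrib_left mult.assoc del: sum.lessThan_Suc)
  also have "\<dots> = (1 - (1 - p) ^ n) +
      (\<Sum>k<n. real (n choose k) * p ^ k * ((1 - p) ^ (n - k) - ((1 - p) - p) ^ (n - k)) * mean_X p k)"
    using sum_I_weight[of n] Suc weight by simp
  finally show ?thesis
    by (simp add: lessThan_Suc_atMost[symmetric] Suc)
qed (simp add: mean_X_def)

lemma egf_mean_X_functional_equation:
  "egf (mean_X p) z - egf (mean_X p) (of_real (1 - p) * z) =
     exp z - exp (of_real (1 - p) * z)
     + egf (mean_X p) (of_real p * z) * (exp (of_real (1 - p) * z) - exp (of_real ((1 - p) - p) * z))"
proof -
  let ?S = "\<lambda>n u. \<Sum>k\<le>n. real (n choose k) * p ^ k * u ^ (n - k) * mean_X p k"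
  have coeff_lhs: "of_real ((1 - r ^ n) * a) * z ^ n / fact n
      = of_real a * z ^ n / fact n - of_real a * (of_real r * z) ^ n / fact n" for r a :: real and n
    by (simp add: power_mult_distrib field_simps)
  have coeff_rhs: "of_real ((1 - r ^ n) + (A - B)) * z ^ n / fact n
      = (z ^ n / fact n - (of_real r * z) ^ n / fact n)
        + (of_real A * z ^ n / fact n - of_real B * z ^ n / fact n)" for r A B :: real and n
    by (simp add: power_mult_distrib field_simps)
  have lhs: "(\<lambda>n. of_real ((1 - (1 - p) ^ n) * mean_X p n) * z ^ n / fact n)
      sums (egf (mean_X p) z - egf (mean_X p) (of_real (1 - p) * z))"
    unfolding coeff_lhs by (intro sums_diff egf_sums abs_mean_X_le)
  have rhs: "(\<lambda>n. of_real ((1 - (1 - p) ^ n) + (?S n (1 - p) - ?S n ((1 - p) - p))) * z ^ n / fact n)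
      sums (exp z - exp (of_real (1 - p) * z)
        + (egf (mean_X p) (of_real p * z) * exp (of_real (1 - p) * z)
           - egf (mean_X p) (of_real p * z) * exp (of_real ((1 - p) - p) * z)))"
    unfolding coeff_rhs by (intro sums_add sums_diff exp_sums_complex egf_times_exp_sums abs_mean_X_le)
  have "?S n (1 - p) - ?S n ((1 - p) - p)
      = (\<Sum>k\<le>n. real (n choose k) * p ^ k * ((1 - p) ^ (n - k) - ((1 - p) - p) ^ (n - k)) * mean_X p k)" for n
    by (simp add: sum_subtractf algebra_simps)
  then have "(1 - (1 - p) ^ n) * mean_X p n = (1 - (1 - p) ^ n) + (?S n (1 - p) - ?S n ((1 - p) - p))" for n
    by (simp only: mean_X_recurrence)
  with lhs have "(\<lambda>n. of_real ((1 - (1 - p) ^ n) + (?S n (1 - p) - ?S n ((1 - p) - p))) * z ^ n / fact n)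
      sums (egf (mean_X p) z - egf (mean_X p) (of_real (1 - p) * z))"
    by simp
  from sums_unique2[OF this rhs] show ?thesis
    by (simp only: right_diff_distrib[of "egf (mean_X p) (of_real p * z)"])
qed

lemma f1_functional_equation:
  "f1 p z = exp (- of_real p * z) * f1 p (of_real (1 - p) * z)
     + (1 - exp (- of_real p * z)) * (1 + f1 p (of_real p * z))"
proof -
  define E where "E = exp (- of_real p * z)"
  have egf_eq: "egf (mean_X p) w = exp w * f1 p w" for w
    by (simp add: f1_eq_egf exp_minus)
  have exp_q: "exp (of_real (1 - p) * z) = exp z * E"
    and exp_qp: "exp (of_real ((1 - p) - p) * z) = exp z * E * E"
    and exp_p: "exp (of_real p * z) * E = 1"
    by (simp_all add: E_def algebra_simps flip: exp_add)
  have "exp z * f1 p z - exp z * E * f1 p (of_real (1 - p) * z)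
      = exp z - exp z * E + f1 p (of_real p * z) * exp z * (1 - E) * (exp (of_real p * z) * E)"
    using egf_mean_X_functional_equation[of z] unfolding egf_eq exp_q exp_qp
    by (simp add: algebra_simps)
  then have "exp z * f1 p z = exp z * (E * f1 p (of_real (1 - p) * z) + (1 - E) * (1 + f1 p (of_real p * z)))"
    unfolding exp_p by (simp add: algebra_simps)
  then show ?thesis
    by (simp add: E_def)
qed

lemma norm_f1_le: "0 \<le> Re z \<Longrightarrow> norm (f1 p z) \<le> norm z * exp (norm z)"
  using norm_egf_le[of "mean_X p" z] abs_mean_X_le
  by (simp add: f1_eq_egf norm_mult mult_le_one order_trans[OF mult_left_le_one_le])

lemma f1_growth:
  assumes "0 < \<eta>"
  obtains C where "0 < C" "\<And>z. 0 \<le> Re z \<Longrightarrow> norm (f1 p z) \<le> C * norm z * exp (\<eta> * norm z)"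
  using functional_equation_growth[OF p_pos p_le_q assms f1_functional_equation norm_f1_le] by blast

lemma phi_kernel_sector_bound:
  assumes \<kappa>: "0 < \<kappa>"
  obtains K where "0 < K"
    "\<And>z. \<kappa> * norm z \<le> Re z \<Longrightarrow> norm (phi_kernel p z) \<le> K * norm z * exp (- (\<kappa> / 2) * norm z)"
proof -
  define c where "c = (1 - p) / p"
  have c: "1 \<le> c"
    using p_pos p_le_q by (simp add: c_def)
  have "0 < \<kappa> / (2 * c)"
    using \<kappa> c by simp
  then obtain C where C: "0 < C"
    "\<And>z. 0 \<le> Re z \<Longrightarrow> norm (f1 p z) \<le> C * norm z * exp (\<kappa> / (2 * c) * norm z)"
    using f1_growth by blast
  show ?thesis
  proof (rule that[of "C * (1 + c)"])
    show "0 < C * (1 + c)"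
      using C c by simp
    fix z assume z: "\<kappa> * norm z \<le> Re z"
    define r where "r = norm z"
    have Re_z: "0 \<le> Re z"
      using z \<kappa> by (smt (verit) mult_nonneg_nonneg norm_ge_zero)
    have "norm (f1 p (of_real c * z)) \<le> C * (c * r) * exp (\<kappa> / 2 * r)"
      using C(2)[of "of_real c * z"] Re_z c by (simp add: norm_mult r_def)
    moreover have "norm (f1 p z) \<le> C * r * exp (\<kappa> / 2 * r)"
    proof -
      have "\<kappa> / (2 * c) * r \<le> \<kappa> / 2 * r"
        using \<kappa> c by (intro mult_right_mono) (auto simp: r_def field_simps)
      then show ?thesis
        using C(2)[OF Re_z] C(1) by (simp add: r_def order_trans[OF _ mult_left_mono])
    qed
    moreover have "norm (exp (- z)) \<le> exp (- (\<kappa> * r))"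
      using z by (simp add: r_def)
    ultimately have "norm (phi_kernel p z) \<le> exp (- (\<kappa> * r)) * (C * (c * r) * exp (\<kappa> / 2 * r) + C * r * exp (\<kappa> / 2 * r))"
      unfolding phi_kernel_def c_def[symmetric] norm_mult
      by (intro mult_mono order.trans[OF norm_triangle_ineq4] add_mono) auto
    also have "\<dots> = C * (1 + c) * r * (exp (- (\<kappa> * r)) * exp (\<kappa> / 2 * r))"
      by (simp add: algebra_simps)
    also have "exp (- (\<kappa> * r)) * exp (\<kappa> / 2 * r) = exp (- (\<kappa> / 2) * r)"
      by (simp flip: exp_add)
    finally show "norm (phi_kernel p z) \<le> C * (1 + c) * norm z * exp (- (\<kappa> / 2) * norm z)"
      by (simp add: r_def)
  qed
qed

text \<open>For the rotation the factor e^{-Im s arg z} of |z^{s-1}| is bounded crudely by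
  e^{|Im s| \<pi>}; on the rotated ray it is exactly e^{-Im s arg w}, which yields the decay in Im s.\<close>

lemma norm_phi_star_le:
  assumes s: "-1 < Re s" and \<kappa>: "0 < \<kappa>"
    and K: "\<And>z. \<kappa> * norm z \<le> Re z \<Longrightarrow> norm (phi_kernel p z) \<le> K * norm z * exp (- (\<kappa> / 2) * norm z)"
    and w: "norm w = 1" "\<kappa> \<le> Re w"
  shows "norm (phi_star p s)
    \<le> K * exp (- Im s * Arg w) * integral {0<..} (\<lambda>x. x powr Re s * exp (- (\<kappa> / 2) * x))"
proof -
  define h where "h z = z powr (s - 1) * phi_kernel p z" for z
  have "0 \<le> K * exp (- (\<kappa> / 2))"
    using order_trans[OF norm_ge_zero K[of w]] w by simp
  then have "0 \<le> K"
    by (simp add: zero_le_mult_iff)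
  interpret sector_decay h \<kappa> "K * exp (\<bar>Im s\<bar> * pi)" "Re s" "\<kappa> / 2"
    unfolding h_def[abs_def] by (rule sector_decay_phi_integrand[OF s \<kappa> \<open>0 \<le> K\<close> K])
  have "phi_star p s = integral {0<..} (\<lambda>x. h (of_real x))"
    by (simp add: phi_star_eq_integral h_def)
  also have "\<dots> = integral {0<..} (\<lambda>x. h (of_real x * w) * w)"
    by (rule integral_rotate_ray[OF w])
  finally have phi_star_eq: "phi_star p s = integral {0<..} (\<lambda>x. h (of_real x * w) * w)" .
  have "norm (integral {0<..} (\<lambda>x. h (of_real x * w) * w))
      \<le> integral {0<..} (\<lambda>x. K * exp (- Im s * Arg w) * (x powr Re s * exp (- (\<kappa> / 2) * x)))"
  proof (intro integral_norm_bound_integral ballI)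
    show "(\<lambda>x. h (of_real x * w) * w) integrable_on {0<..}"
      using ray_absolutely_integrable[OF w] absolutely_integrable_on_def by blast
    show "(\<lambda>x. K * exp (- Im s * Arg w) * (x powr Re s * exp (- (\<kappa> / 2) * x))) integrable_on {0<..}"
      using integrable_cmul[OF integrable_powr_exp_Ioi[of "Re s" "\<kappa> / 2"], of "K * exp (- Im s * Arg w)"] \<kappa> s
      by simp
    fix x :: real assume x: "x \<in> {0<..}"
    have "of_real x * w \<noteq> 0" "\<kappa> * norm (of_real x * w) \<le> Re (of_real x * w)"
      using w x by (auto simp: norm_mult)
    from norm_powr_phi_kernel_le[OF K this(2,1)]
    show "norm (h (of_real x * w) * w) \<le> K * exp (- Im s * Arg w) * (x powr Re s * exp (- (\<kappa> / 2) * x))"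
      using w x by (simp add: h_def norm_mult mult_ac)
  qed
  then show ?thesis
    by (simp add: phi_star_eq)
qed

lemma phi_star_bigo_exp:
  assumes \<sigma>: "-1 < \<sigma>" and \<theta>: "0 \<le> \<theta>" "\<theta> < pi / 2"
  shows "(\<lambda>t. norm (phi_star p (Complex \<sigma> t))) \<in> O[at_infinity](\<lambda>t. exp (- \<theta> * \<bar>t\<bar>))"
proof -
  have \<kappa>: "0 < cos \<theta>"
    using \<theta> by (intro cos_gt_zero_pi) auto
  obtain K where K: "0 < K"
    "\<And>z. cos \<theta> * norm z \<le> Re z \<Longrightarrow> norm (phi_kernel p z) \<le> K * norm z * exp (- (cos \<theta> / 2) * norm z)"
    using phi_kernel_sector_bound[OF \<kappa>] by blast
  define I where "I = integral {0<..} (\<lambda>x. x powr \<sigma> * exp (- (cos \<theta> / 2) * x))"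
  show ?thesis
  proof (intro bigoI[of _ "K * I"] always_eventually allI)
    fix t :: real
    define \<phi> where "\<phi> = (if 0 \<le> t then \<theta> else - \<theta>)"
    have "Arg (cis \<phi>) = \<phi>"
      using \<theta> pi_gt_zero by (intro Arg_cis) (auto simp: \<phi>_def)
    moreover have "Re (cis \<phi>) = cos \<theta>" "- t * \<phi> = - \<theta> * \<bar>t\<bar>"
      by (auto simp: \<phi>_def)
    ultimately have "norm (phi_star p (Complex \<sigma> t)) \<le> K * I * exp (- \<theta> * \<bar>t\<bar>)"
      using norm_phi_star_le[of "Complex \<sigma> t" "cos \<theta>" K "cis \<phi>"] \<sigma> \<kappa> K
      by (simp add: I_def mult_ac)
    then show "norm (norm (phi_star p (Complex \<sigma> t))) \<le> K * I * norm (exp (- \<theta> * \<bar>t\<bar>))"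
      by simp
  qed
qed

end

theorem mainTheorem4:
  fixes p :: real
  assumes "0 < p" and "p \<le> 1 - p"
  shows "\<forall>\<sigma>::real. \<sigma> > -1 \<longrightarrow> (\<forall>\<epsilon>::real. \<epsilon> > 0 \<longrightarrow>
    (\<lambda>t::real. norm (phi_star p (Complex \<sigma> t)))
      \<in> O[at_infinity](\<lambda>t. exp (- (pi / 2 - \<epsilon>) * \<bar>t\<bar>)))"
proof (intro allI impI)
  fix \<sigma> \<epsilon> :: real
  assume \<sigma>: "\<sigma> > -1" and \<epsilon>: "\<epsilon> > 0"
  define \<theta> where "\<theta> = pi / 2 - min \<epsilon> (pi / 4)"
  have \<theta>: "0 \<le> \<theta>" "\<theta> < pi / 2" "pi / 2 - \<epsilon> \<le> \<theta>"
    using \<epsilon> pi_gt_zero by (auto simp: \<theta>_def min_def)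
  have "(\<lambda>t. norm (phi_star p (Complex \<sigma> t))) \<in> O[at_infinity](\<lambda>t. exp (- \<theta> * \<bar>t\<bar>))"
    by (rule phi_star_bigo_exp[OF assms \<sigma> \<theta>(1,2)])
  also have "(\<lambda>t. exp (- \<theta> * \<bar>t\<bar>)) \<in> O[at_infinity](\<lambda>t. exp (- (pi / 2 - \<epsilon>) * \<bar>t\<bar>))"
  proof (intro bigoI[of _ 1] always_eventually allI)
    fix t :: real
    have "- \<theta> * \<bar>t\<bar> \<le> - (pi / 2 - \<epsilon>) * \<bar>t\<bar>"
      using \<theta> by (intro mult_right_mono) auto
    then show "norm (exp (- \<theta> * \<bar>t\<bar>)) \<le> 1 * norm (exp (- (pi / 2 - \<epsilon>) * \<bar>t\<bar>))"
      by simp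
  qed
  finally show "(\<lambda>t. norm (phi_star p (Complex \<sigma> t))) \<in> O[at_infinity](\<lambda>t. exp (- (pi / 2 - \<epsilon>) * \<bar>t\<bar>))" .
qed

end
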